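(* Let $D$ and $A$ be as in the context, and let $f$ be any map from the set $Y=\{y_1,\dots,y_d\}$ to $A$. Then there exists a derivation $\tau\in\mathrm{Der}(D,A)$ with $\tau|_Y=f$.
   Context: $p$ is an odd prime, $d\geq 2$. $D=\langle y_1,\dots,y_d\rangle$ is a finite $p$-group of exponent $p$ and nilpotency class $2$ with $|D/\Phi(D)|=p^d$ and $|\Phi(D)/\gamma_3(D)|=p^{\binom d2}$ (the free group of rank $d$ in the variety of class-$\le2$ exponent-$p$ groups). Let $S=\langle a\rangle\cong\mathrm{F}_p$ be the trivial $D$-module, and for $1\le j\le d$ let $\delta_j:D\to S$ be the homomorphism with $\delta_j(y_j)=a$ and $\delta_j(y_i)=0$ for $i\ne j$. Let $A=S\oplus\bigoplus_{i=1}^d\langle r_i\rangle$ with each $\langle r_i\rangle\cong\mathrm{F}_p$, with $D$-action $(la+\sum_i k_ir_i)^g=la+\sum_i k_i(r_i-\delta_i(g))$ for $g\in D$. Derivations $\tau:D\to A$ satisfy $\tau(xy)=\tau(x)^y+\tau(y)$. *)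

theory Defs
  imports "HOL-Algebra.Algebra" "HOL-Number_Theory.Residues"
begin

definition maximal_subgroup :: "('a, 'b) monoid_scheme \<Rightarrow> 'a set \<Rightarrow> bool" where
  "maximal_subgroup G H \<longleftrightarrow> subgroup H G \<and> H \<noteq> carrier G \<and>
     (\<forall>K. subgroup K G \<and> H \<subseteq> K \<longrightarrow> K = H \<or> K = carrier G)"

definition frattini :: "('a, 'b) monoid_scheme \<Rightarrow> 'a set" where
  "frattini G = carrier G \<inter> \<Inter> {H. maximal_subgroup G H}"

definition comm_subgroup :: "('a, 'b) monoid_scheme \<Rightarrow> 'a set \<Rightarrow> 'a set \<Rightarrow> 'a set" where
  "comm_subgroup G H K = generate G
     {h \<otimes>\<^bsub>G\<^esub> k \<otimes>\<^bsub>G\<^esub> inv\<^bsub>G\<^esub> h \<otimes>\<^bsub>G\<^esub> inv\<^bsub>G\<^esub> k | h k. h \<in> H \<and> k \<in> K}"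

definition gamma2 :: "('a, 'b) monoid_scheme \<Rightarrow> 'a set" where
  "gamma2 G = comm_subgroup G (carrier G) (carrier G)"

definition gamma3 :: "('a, 'b) monoid_scheme \<Rightarrow> 'a set" where
  "gamma3 G = comm_subgroup G (gamma2 G) (carrier G)"

(* The module A = S + <r_1> + ... + <r_d> over F_p, elements encoded as v :: nat => int,
   v 0 = coefficient of a, v i = coefficient of r_i (1 <= i <= d), entries in {0..p-1},
   and v i = 0 for i > d. *)
definition Amod :: "nat \<Rightarrow> nat \<Rightarrow> (nat \<Rightarrow> int) set" where
  "Amod p d = {v. (\<forall>i\<le>d. v i \<in> {0..<int p}) \<and> (\<forall>i>d. v i = 0)}"

definition addA :: "nat \<Rightarrow> (nat \<Rightarrow> int) \<Rightarrow> (nat \<Rightarrow> int) \<Rightarrow> (nat \<Rightarrow> int)" where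
  "addA p v w = (\<lambda>i. (v i + w i) mod int p)"

(* action: (l a + sum k_i r_i)^g = l a + sum k_i (r_i - delta_i(g)) *)
definition actA :: "nat \<Rightarrow> nat \<Rightarrow> (nat \<Rightarrow> 'a \<Rightarrow> int) \<Rightarrow> 'a \<Rightarrow> (nat \<Rightarrow> int) \<Rightarrow> (nat \<Rightarrow> int)" where
  "actA p d \<delta> g v = (\<lambda>i. if i = 0 then (v 0 - (\<Sum>j\<in>{1..d}. v j * \<delta> j g)) mod int p else v i)"

definition is_derivation ::
  "('a, 'b) monoid_scheme \<Rightarrow> nat \<Rightarrow> nat \<Rightarrow> (nat \<Rightarrow> 'a \<Rightarrow> int) \<Rightarrow> ('a \<Rightarrow> nat \<Rightarrow> int) \<Rightarrow> bool" where
  "is_derivation D p d \<delta> \<tau> \<longleftrightarrow>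
     (\<forall>x\<in>carrier D. \<tau> x \<in> Amod p d) \<and>
     (\<forall>x\<in>carrier D. \<forall>y\<in>carrier D. \<tau> (x \<otimes>\<^bsub>D\<^esub> y) = addA p (actA p d \<delta> y (\<tau> x)) (\<tau> y))"

end

theory Submission
  imports Defs
begin

(* Let E be the semidirect product of D and A. A map tau from D to A is a derivation
   exactly when its graph {(x, tau x)} is a subgroup of E, so it suffices to find a subgroup
   of E containing the pairs (y_i, f_i) that projects bijectively onto D. Take the subgroup
   generated by these d pairs; it projects onto D because the y_i generate D. As p is odd,
   E again has exponent p, and commutators of E are central because D has class 2 and every
   delta_j vanishes on commutators. A group of exponent p and class at most 2 generated by d
   elements has order at most p^d * p^(d choose 2): each element is a product of powers of the
   generators times a product of powers of their pairwise commutators, which are central. This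
   bound is the order of D by the Frattini data, so the projection is injective. *)

section \<open>Commutators, the centre and the Frattini subgroup\<close>

definition commutator :: "('a, 'b) monoid_scheme \<Rightarrow> 'a \<Rightarrow> 'a \<Rightarrow> 'a" where
  "commutator G x y = x \<otimes>\<^bsub>G\<^esub> y \<otimes>\<^bsub>G\<^esub> inv\<^bsub>G\<^esub> x \<otimes>\<^bsub>G\<^esub> inv\<^bsub>G\<^esub> y"

definition center :: "('a, 'b) monoid_scheme \<Rightarrow> 'a set" where
  "center G = {z \<in> carrier G. \<forall>x\<in>carrier G. z \<otimes>\<^bsub>G\<^esub> x = x \<otimes>\<^bsub>G\<^esub> z}"

context group
begin

lemma m_inv_cancel_left [simp]:
  "x \<in> carrier G \<Longrightarrow> y \<in> carrier G \<Longrightarrow> x \<otimes> (inv x \<otimes> y) = y"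
  by (simp add: m_assoc[symmetric])

lemma inv_m_cancel_left [simp]:
  "x \<in> carrier G \<Longrightarrow> y \<in> carrier G \<Longrightarrow> inv x \<otimes> (x \<otimes> y) = y"
  by (simp add: m_assoc[symmetric])

lemma commutator_closed [intro, simp]:
  "x \<in> carrier G \<Longrightarrow> y \<in> carrier G \<Longrightarrow> commutator G x y \<in> carrier G"
  unfolding commutator_def by simp

lemma inv_commutator:
  "x \<in> carrier G \<Longrightarrow> y \<in> carrier G \<Longrightarrow> inv (commutator G x y) = commutator G y x"
  unfolding commutator_def by (simp add: m_assoc inv_mult_group)

lemma commutator_self: "x \<in> carrier G \<Longrightarrow> commutator G x x = \<one>"
  unfolding commutator_def by (simp add: m_assoc)

lemma m_comm_commutator:
  assumes "x \<in> carrier G" "y \<in> carrier G"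
  shows "x \<otimes> y = commutator G x y \<otimes> (y \<otimes> x)"
proof -
  have "inv x \<otimes> (inv y \<otimes> (y \<otimes> x)) = \<one>"
    using assms by (simp add: m_assoc[symmetric])
  then show ?thesis using assms by (simp add: commutator_def m_assoc)
qed

lemma commutator_eq_one_iff:
  assumes "x \<in> carrier G" "y \<in> carrier G"
  shows "commutator G x y = \<one> \<longleftrightarrow> x \<otimes> y = y \<otimes> x"
  using m_comm_commutator[OF assms] assms by (metis commutator_closed l_one m_closed r_cancel_one)

lemma commutator_in_comm_subgroup:
  "x \<in> H \<Longrightarrow> y \<in> K \<Longrightarrow> commutator G x y \<in> comm_subgroup G H K"
  unfolding comm_subgroup_def commutator_def by (rule generate.incl) blast

lemma subgroup_center: "subgroup (center G) G"
proof (rule subgroupI)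
  fix a assume a: "a \<in> center G"
  have "inv a \<otimes> x = x \<otimes> inv a" if x: "x \<in> carrier G" for x
  proof -
    have ac: "a \<in> carrier G" and e: "a \<otimes> x = x \<otimes> a" using a x by (auto simp: center_def)
    have "inv a \<otimes> x = inv a \<otimes> (x \<otimes> a) \<otimes> inv a" using ac x by (simp add: m_assoc)
    also have "\<dots> = inv a \<otimes> (a \<otimes> x) \<otimes> inv a" by (simp only: e)
    also have "\<dots> = x \<otimes> inv a" using ac x by (simp add: m_assoc[symmetric])
    finally show ?thesis .
  qed
  then show "inv a \<in> center G" using a by (simp add: center_def)
next
  fix a b assume "a \<in> center G" "b \<in> center G"
  then have ab: "a \<in> carrier G" "b \<in> carrier G"
    and e: "\<And>x. x \<in> carrier G \<Longrightarrow> a \<otimes> x = x \<otimes> a" "\<And>x. x \<in> carrier G \<Longrightarrow> b \<otimes> x = x \<otimes> b"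
    by (auto simp: center_def)
  have "a \<otimes> b \<otimes> x = x \<otimes> (a \<otimes> b)" if x: "x \<in> carrier G" for x
  proof -
    have "a \<otimes> b \<otimes> x = a \<otimes> (x \<otimes> b)" using ab x by (simp only: m_assoc e(2)[OF x])
    also have "\<dots> = a \<otimes> x \<otimes> b" using ab x by (simp only: m_assoc)
    also have "\<dots> = x \<otimes> (a \<otimes> b)" using ab x by (simp only: m_assoc e(1)[OF x])
    finally show ?thesis .
  qed
  then show "a \<otimes> b \<in> center G" using ab by (simp add: center_def)
qed (auto simp: center_def)

lemma normal_if_subset_center:
  assumes "subgroup H G" "H \<subseteq> center G"
  shows "H \<lhd> G"
proof (rule normal_invI[OF assms(1)])
  fix x h assume x: "x \<in> carrier G" and h: "h \<in> H"
  then have "x \<otimes> h = h \<otimes> x" "h \<in> carrier G" using assms(2) by (auto simp: center_def)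
  then have "x \<otimes> h \<otimes> inv x = h" using x by (simp add: m_assoc)
  then show "x \<otimes> h \<otimes> inv x \<in> H" using h by simp
qed

lemma commutator_in_center_if_gamma3_trivial:
  assumes "gamma3 G = {\<one>}" and x: "x \<in> carrier G" and y: "y \<in> carrier G"
  shows "commutator G x y \<in> center G"
proof -
  have "commutator G x y \<in> gamma2 G"
    unfolding gamma2_def using x y by (rule commutator_in_comm_subgroup)
  then have "commutator G (commutator G x y) z = \<one>" if "z \<in> carrier G" for z
    using assms(1) commutator_in_comm_subgroup[of _ "gamma2 G" z "carrier G"] that
    unfolding gamma3_def by blast
  then show ?thesis using x y by (simp add: center_def commutator_eq_one_iff)
qed

lemma subgroup_frattini: "subgroup (frattini G) G"
proof -
  have "frattini G = \<Inter> (insert (carrier G) {H. maximal_subgroup G H})"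
    by (auto simp: frattini_def)
  then show ?thesis
    by (metis insert_not_empty mem_Collect_eq insertE maximal_subgroup_def subgroup_self subgroups_Inter)
qed

lemma card_carrier_frattini:
  assumes "finite (carrier G)"
  shows "card (carrier G) = card (rcosets (frattini G)) * card (rcosets\<^bsub>G\<lparr>carrier := frattini G\<rparr>\<^esub> {\<one>})"
proof -
  have "finite (frattini G)"
    using assms subgroup.subset[OF subgroup_frattini] finite_subset by blast
  then show ?thesis
    using lagrange[OF subgroup_frattini]
      group.card_rcosets_triv[OF subgroup.subgroup_is_group[OF subgroup_frattini is_group]]
    by (simp add: order_def)
qed

end

section \<open>Groups of exponent p and class at most two\<close>

lemma card_ordered_pairs_le:
  fixes A :: "'a :: linorder set"
  assumes "finite A"
  shows "card {(k, j). k \<in> A \<and> j \<in> A \<and> k < j} \<le> card A choose 2"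
proof -
  let ?P = "{(k, j). k \<in> A \<and> j \<in> A \<and> k < j}"
  have "inj_on (\<lambda>(k, j). {k, j}) ?P"
    by (rule inj_onI) (auto simp: doubleton_eq_iff)
  moreover have "(\<lambda>(k, j). {k, j}) ` ?P \<subseteq> {B. B \<subseteq> A \<and> card B = 2}" by auto
  moreover have "finite {B. B \<subseteq> A \<and> card B = 2}" using assms by simp
  ultimately have "card ?P \<le> card {B. B \<subseteq> A \<and> card B = 2}"
    using card_inj_on_le by blast
  also have "\<dots> = card A choose 2" using n_subsets[OF assms] by simp
  finally show ?thesis .
qed

context group
begin

lemma pow_mod_exponent:
  assumes "s \<in> carrier G" "s [^] (p::nat) = \<one>"
  shows "s [^] k = s [^] (k mod p)"
proof -
  have "s [^] k = s [^] (p * (k div p)) \<otimes> s [^] (k mod p)"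
    using assms(1) by (simp add: nat_pow_mult)
  also have "s [^] (p * (k div p)) = \<one>"
    using assms by (simp add: nat_pow_pow[symmetric])
  finally show ?thesis using assms by simp
qed

lemma subgroup_conj_preimage:
  assumes "subgroup R G" "s \<in> carrier G"
  shows "subgroup {x \<in> carrier G. inv s \<otimes> x \<otimes> s \<in> R} G"
proof (rule subgroupI)
  fix x assume "x \<in> {x \<in> carrier G. inv s \<otimes> x \<otimes> s \<in> R}"
  then have "x \<in> carrier G" "inv (inv s \<otimes> x \<otimes> s) \<in> R"
    using subgroup.m_inv_closed[OF assms(1)] by auto
  then show "inv x \<in> {x \<in> carrier G. inv s \<otimes> x \<otimes> s \<in> R}"
    using assms(2) by (simp add: inv_mult_group m_assoc)
next
  fix x y assume "x \<in> {x \<in> carrier G. inv s \<otimes> x \<otimes> s \<in> R}" "y \<in> {x \<in> carrier G. inv s \<otimes> x \<otimes> s \<in> R}"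
  then have "x \<in> carrier G" "y \<in> carrier G" "(inv s \<otimes> x \<otimes> s) \<otimes> (inv s \<otimes> y \<otimes> s) \<in> R"
    using subgroup.m_closed[OF assms(1)] by auto
  then show "x \<otimes> y \<in> {x \<in> carrier G. inv s \<otimes> x \<otimes> s \<in> R}"
    using assms(2) by (simp add: m_assoc[symmetric]) (simp add: m_assoc)
next
  show "{x \<in> carrier G. inv s \<otimes> x \<otimes> s \<in> R} \<noteq> {}"
  proof -
    have "\<one> \<in> {x \<in> carrier G. inv s \<otimes> x \<otimes> s \<in> R}"
      using assms subgroup.one_closed by fastforce
    then show ?thesis by blast
  qed
qed auto

lemma conj_pow_closed:
  assumes R: "subgroup R G" and s: "s \<in> carrier G"
    and conj: "\<And>x. x \<in> R \<Longrightarrow> inv s \<otimes> x \<otimes> s \<in> R" and x: "x \<in> R"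
  shows "inv (s [^] (j::nat)) \<otimes> x \<otimes> s [^] j \<in> R"
proof (induction j)
  case 0 show ?case using x subgroup.mem_carrier[OF R] by simp
next
  case (Suc j)
  have "inv (s [^] Suc j) \<otimes> x \<otimes> s [^] Suc j = inv s \<otimes> (inv (s [^] j) \<otimes> x \<otimes> s [^] j) \<otimes> s"
    using s x subgroup.mem_carrier[OF R] by (simp add: inv_mult_group m_assoc)
  then show ?case using conj[OF Suc] by simp
qed

lemma subgroup_pow_mult:
  assumes R: "subgroup R G" and s: "s \<in> carrier G" "s [^] (p::nat) = \<one>" and p: "0 < p"
    and conj: "\<And>x. x \<in> R \<Longrightarrow> inv s \<otimes> x \<otimes> s \<in> R"
  shows "subgroup ((\<lambda>(i, x). s [^] i \<otimes> x) ` ({..<p} \<times> R)) G" (is "subgroup ?T G")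
proof -
  have RC: "R \<subseteq> carrier G" using R subgroup.subset by blast
  show ?thesis
  proof (rule subgroupI)
    show "?T \<subseteq> carrier G" using RC s by auto
    show "?T \<noteq> {}" using subgroup.one_closed[OF R] p by auto
  next
    fix a assume "a \<in> ?T"
    then obtain i x where ix: "i < p" "x \<in> R" "a = s [^] i \<otimes> x" by auto
    define k where "k = (p - i) mod p"
    have "inv (s [^] i) = s [^] (p - i)"
      using s ix by (intro inv_equality) (auto simp: nat_pow_mult)
    then have "inv (s [^] i) = s [^] k" unfolding k_def using pow_mod_exponent[OF s] by simp
    moreover have "x \<in> carrier G" using ix RC by auto
    ultimately have "inv a = s [^] k \<otimes> (inv (s [^] k) \<otimes> inv x \<otimes> s [^] k)"
      using ix s by (simp add: inv_mult_group m_assoc[symmetric])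
    moreover have "inv (s [^] k) \<otimes> inv x \<otimes> s [^] k \<in> R"
      using conj_pow_closed[OF R s(1) conj] subgroup.m_inv_closed[OF R ix(2)] by blast
    moreover have "k < p" unfolding k_def using p by simp
    ultimately show "inv a \<in> ?T" by force
  next
    fix a b assume "a \<in> ?T" "b \<in> ?T"
    then obtain i x j y where ix: "i < p" "x \<in> R" "a = s [^] i \<otimes> x"
      and jy: "j < p" "y \<in> R" "b = s [^] j \<otimes> y" by auto
    have "x \<in> carrier G" "y \<in> carrier G" using ix jy RC by auto
    then have "a \<otimes> b = s [^] (i + j) \<otimes> ((inv (s [^] j) \<otimes> x \<otimes> s [^] j) \<otimes> y)"
      using ix jy s by (simp add: m_assoc nat_pow_mult[symmetric])
    also have "s [^] (i + j) = s [^] ((i + j) mod p)" using pow_mod_exponent[OF s] by blast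
    finally have "a \<otimes> b = s [^] ((i + j) mod p) \<otimes> ((inv (s [^] j) \<otimes> x \<otimes> s [^] j) \<otimes> y)" .
    moreover have "(inv (s [^] j) \<otimes> x \<otimes> s [^] j) \<otimes> y \<in> R"
      using conj_pow_closed[OF R s(1) conj ix(2)] jy(2) subgroup.m_closed[OF R] by blast
    moreover have "(i + j) mod p < p" using p by simp
    ultimately show "a \<otimes> b \<in> ?T" by force
  qed
qed

lemma conj_generate_closed:
  assumes A: "A \<subseteq> carrier G" and s: "s \<in> carrier G"
    and conj: "\<And>x. x \<in> A \<Longrightarrow> inv s \<otimes> x \<otimes> s \<in> generate G A"
    and x: "x \<in> generate G A"
  shows "inv s \<otimes> x \<otimes> s \<in> generate G A"
proof -
  have "A \<subseteq> {x \<in> carrier G. inv s \<otimes> x \<otimes> s \<in> generate G A}" using A conj by auto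
  then have "generate G A \<subseteq> {x \<in> carrier G. inv s \<otimes> x \<otimes> s \<in> generate G A}"
    by (rule generate_subgroup_incl[OF _ subgroup_conj_preimage[OF generate_is_subgroup[OF A] s]])
  then show ?thesis using x by blast
qed

lemma card_generate_insert_le:
  assumes fin: "finite (carrier G)" and A: "A \<subseteq> carrier G"
    and s: "s \<in> carrier G" "s [^] (p::nat) = \<one>" and p: "0 < p"
    and conj: "\<And>x. x \<in> A \<Longrightarrow> inv s \<otimes> x \<otimes> s \<in> generate G A"
  shows "card (generate G (insert s A)) \<le> p * card (generate G A)"
proof -
  define R where "R = generate G A"
  define T where "T = (\<lambda>(i, x). s [^] i \<otimes> x) ` ({..<p} \<times> R)"
  have R: "subgroup R G" unfolding R_def using A by (rule generate_is_subgroup)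
  have T: "subgroup T G" unfolding T_def
    by (rule subgroup_pow_mult[OF R s p conj_generate_closed[OF A s(1) conj, folded R_def]])
  have "s = s [^] (1 mod p) \<otimes> \<one>" using s pow_mod_exponent[OF s, of 1] by simp
  then have "s \<in> T" unfolding T_def using p subgroup.one_closed[OF R]
    by (intro image_eqI[of _ _ "(1 mod p, \<one>)"]) auto
  moreover have "x \<in> T" if "x \<in> A" for x
  proof -
    have "x = s [^] (0::nat) \<otimes> x" "x \<in> R" using that A unfolding R_def by (auto intro: generate.incl)
    then show ?thesis unfolding T_def using p by (intro image_eqI[of _ _ "(0, x)"]) auto
  qed
  ultimately have "generate G (insert s A) \<subseteq> T" by (intro generate_subgroup_incl[OF _ T]) auto
  moreover have "finite R" using R fin subgroup.subset finite_subset by metis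
  moreover have "finite T" unfolding T_def using \<open>finite R\<close> by simp
  ultimately have "card (generate G (insert s A)) \<le> card T" by (simp add: card_mono)
  also have "\<dots> \<le> p * card R" unfolding T_def
    using card_image_le[of "{..<p} \<times> R"] \<open>finite R\<close> by (simp add: card_cartesian_product)
  finally show ?thesis unfolding R_def .
qed

lemma card_generate_Un_normal_le:
  assumes fin: "finite (carrier G)" and N: "N \<lhd> G" and p: "0 < p"
    and S: "finite S" "S \<subseteq> carrier G" "\<forall>s\<in>S. s [^] (p::nat) = \<one>"
    and conj: "\<forall>s\<in>S. \<forall>t\<in>S. inv s \<otimes> t \<otimes> s \<in> t <# N"
  shows "card (generate G (S \<union> N)) \<le> p ^ card S * card N"
  using S conj
proof (induction S rule: finite_induct)
  case empty
  have "generate G N = N"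
    using generate_subgroup_incl[OF _ normal_imp_subgroup[OF N]] generate.incl[of _ N G] by blast
  then show ?case by simp
next
  case (insert s S)
  have NC: "N \<subseteq> carrier G" using normal_imp_subgroup[OF N] subgroup.subset by blast
  have s: "s \<in> carrier G" "s [^] p = \<one>" using insert.prems by auto
  have SN: "S \<union> N \<subseteq> carrier G" using insert.prems NC by auto
  have conj_SN: "inv s \<otimes> x \<otimes> s \<in> generate G (S \<union> N)" if x: "x \<in> S \<union> N" for x
  proof (cases "x \<in> S")
    case True
    then obtain n where "n \<in> N" "inv s \<otimes> x \<otimes> s = x \<otimes> n"
      using insert.prems(3) unfolding l_coset_def by blast
    then show ?thesis using True by (auto intro: generate.eng generate.incl)
  next
    case False
    then show ?thesis using x s normal.inv_op_closed1[OF N] by (auto intro: generate.incl)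
  qed
  have "card (generate G (insert s (S \<union> N))) \<le> p * card (generate G (S \<union> N))"
    by (rule card_generate_insert_le[OF fin SN s p conj_SN])
  also have "\<dots> \<le> p * (p ^ card S * card N)"
    using insert.IH insert.prems by (simp del: Un_iff)
  finally show ?case using insert.hyps by simp
qed

lemma card_generate_central_le:
  assumes fin: "finite (carrier G)" and p: "0 < p"
    and C: "finite C" "C \<subseteq> center G" "\<forall>s\<in>C. s [^] (p::nat) = \<one>"
  shows "card (generate G C) \<le> p ^ card C"
proof -
  have CC: "C \<subseteq> carrier G" using C by (auto simp: center_def)
  have "inv s \<otimes> t \<otimes> s \<in> t <# {\<one>}" if "s \<in> C" "t \<in> C" for s t
  proof -
    have st: "s \<in> carrier G" "t \<in> carrier G" "t \<otimes> s = s \<otimes> t"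
      using that C by (auto simp: center_def)
    then have "inv s \<otimes> t \<otimes> s = t" by (simp add: m_assoc)
    then show ?thesis using st by (simp add: l_coset_def)
  qed
  then have "card (generate G (C \<union> {\<one>})) \<le> p ^ card C * card {\<one>}"
    using card_generate_Un_normal_le[OF fin one_is_normal p C(1) CC C(3)] by blast
  moreover have "generate G C \<subseteq> generate G (C \<union> {\<one>})" by (rule mono_generate) auto
  moreover have "finite (generate G (C \<union> {\<one>}))"
    using generate_incl[of "C \<union> {\<one>}"] CC fin finite_subset by blast
  ultimately have "card (generate G C) \<le> p ^ card C * card {\<one>}" by (meson card_mono order.trans)
  then show ?thesis by simp
qed

lemma conj_eq_mult_commutator:
  assumes s: "s \<in> carrier G" and t: "t \<in> carrier G" and c: "commutator G t s \<in> center G"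
  shows "inv s \<otimes> t \<otimes> s = t \<otimes> commutator G t s"
proof -
  define c where "c = commutator G t s"
  have c: "c \<in> carrier G" "\<And>x. x \<in> carrier G \<Longrightarrow> c \<otimes> x = x \<otimes> c"
    using c unfolding c_def by (auto simp: center_def)
  have "inv s \<otimes> t \<otimes> s = inv s \<otimes> (c \<otimes> (s \<otimes> t))"
    using s t by (simp add: m_assoc c_def m_comm_commutator[OF t s, symmetric])
  also have "\<dots> = (inv s \<otimes> c) \<otimes> (s \<otimes> t)" using s t c by (simp add: m_assoc)
  also have "\<dots> = (c \<otimes> inv s) \<otimes> (s \<otimes> t)" by (simp only: c(2)[OF inv_closed[OF s]])
  also have "\<dots> = c \<otimes> t" using s t c by (simp add: m_assoc)
  also have "\<dots> = t \<otimes> c" by (rule c(2)[OF t])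
  finally show ?thesis unfolding c_def .
qed

lemma card_generate_class2_le:
  fixes g :: "nat \<Rightarrow> 'a"
  assumes fin: "finite (carrier G)" and p: "0 < p"
    and exp: "\<forall>x\<in>carrier G. x [^] (p::nat) = \<one>"
    and class2: "\<forall>x\<in>carrier G. \<forall>y\<in>carrier G. commutator G x y \<in> center G"
    and g: "g ` {1..n} \<subseteq> carrier G"
  shows "card (generate G (g ` {1..n})) \<le> p ^ n * p ^ (n choose 2)"
proof -
  define P where "P = {(k, j). k \<in> {1..n} \<and> j \<in> {1..n} \<and> k < j}"
  define C where "C = (\<lambda>(k, j). commutator G (g k) (g j)) ` P"
  define N where "N = generate G C"
  have gC: "\<And>k. k \<in> {1..n} \<Longrightarrow> g k \<in> carrier G" using g by auto
  have C: "C \<subseteq> center G" using gC class2 by (auto simp: C_def P_def)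
  have "finite P" unfolding P_def by (rule finite_subset[of _ "{1..n} \<times> {1..n}"]) auto
  then have "card C \<le> card P" unfolding C_def by (rule card_image_le)
  also have "\<dots> \<le> n choose 2" unfolding P_def using card_ordered_pairs_le[of "{1..n}"] by simp
  finally have cardC: "card C \<le> n choose 2" .
  have CC: "C \<subseteq> carrier G" using C by (auto simp: center_def)
  have "card N \<le> p ^ card C"
    unfolding N_def using card_generate_central_le[OF fin p _ C] \<open>finite P\<close> CC exp
    by (auto simp: C_def)
  also have "\<dots> \<le> p ^ (n choose 2)" using cardC p by (intro power_increasing) auto
  finally have cardN: "card N \<le> p ^ (n choose 2)" .
  have N: "subgroup N G" unfolding N_def using CC by (rule generate_is_subgroup)
  have NZ: "N \<subseteq> center G" unfolding N_def by (rule generate_subgroup_incl[OF C subgroup_center])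
  have comm_in_N: "commutator G (g k) (g j) \<in> N" if "k \<in> {1..n}" "j \<in> {1..n}" for k j
  proof (cases k j rule: linorder_cases)
    case less
    then have "commutator G (g k) (g j) \<in> C"
      unfolding C_def P_def using that by (intro image_eqI[where x="(k, j)"]) auto
    then show ?thesis unfolding N_def by (rule generate.incl)
  next
    case equal
    then show ?thesis using that gC commutator_self subgroup.one_closed[OF N] by auto
  next
    case greater
    then have "commutator G (g j) (g k) \<in> C"
      unfolding C_def P_def using that by (intro image_eqI[where x="(j, k)"]) auto
    then have "inv (commutator G (g j) (g k)) \<in> N"
      unfolding N_def by (intro generate.inv generate.incl)
    then show ?thesis using that gC by (simp add: inv_commutator)
  qed
  let ?Y = "g ` {1..n}"
  have "inv s \<otimes> t \<otimes> s \<in> t <# N" if st: "s \<in> ?Y" "t \<in> ?Y" for s t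
  proof -
    obtain k j where "k \<in> {1..n}" "j \<in> {1..n}" "s = g k" "t = g j" using st by blast
    then have "s \<in> carrier G" "t \<in> carrier G" "commutator G t s \<in> N" using gC comm_in_N by auto
    then show ?thesis using conj_eq_mult_commutator NZ unfolding l_coset_def by blast
  qed
  then have "card (generate G (?Y \<union> N)) \<le> p ^ card ?Y * card N"
    using card_generate_Un_normal_le[OF fin normal_if_subset_center[OF N NZ] p _ g] gC exp by auto
  also have "\<dots> \<le> p ^ n * p ^ (n choose 2)"
    using card_image_le[of "{1..n}" g] p cardN by (intro mult_le_mono power_increasing) auto
  finally have "card (generate G (?Y \<union> N)) \<le> p ^ n * p ^ (n choose 2)" .
  moreover have "finite (generate G (?Y \<union> N))"
    using generate_incl[of "?Y \<union> N"] g subgroup.subset[OF N] fin finite_subset by blast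
  moreover have "generate G ?Y \<subseteq> generate G (?Y \<union> N)" by (rule mono_generate) auto
  ultimately show ?thesis by (meson card_mono order.trans)
qed

end

section \<open>The semidirect product of D and A\<close>

lemma sum_mult_mod_right:
  "(\<Sum>j\<in>A. (g j mod m) * f j) mod m = (\<Sum>j\<in>A. g j * f j) mod (m::int)"
proof -
  have "(\<Sum>j\<in>A. (g j mod m) * f j) mod m = (\<Sum>j\<in>A. (g j mod m) * f j mod m) mod m"
    by (simp add: mod_sum_eq)
  also have "\<dots> = (\<Sum>j\<in>A. g j * f j mod m) mod m" by (simp add: mod_mult_left_eq)
  also have "\<dots> = (\<Sum>j\<in>A. g j * f j) mod m" by (simp add: mod_sum_eq)
  finally show ?thesis .
qed

lemma mod_diff_right_cong: "x mod m = y mod m \<Longrightarrow> (a - x) mod m = (a - y) mod (m::int)"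
  by (metis mod_diff_right_eq)

lemma dvd_choose_2: "odd p \<Longrightarrow> p dvd p choose 2"
proof -
  assume "odd p"
  then obtain k where k: "p = 2 * k + 1" using oddE by blast
  have "p choose 2 = p * (p - 1) div 2" by (rule choose_two)
  also have "\<dots> = p * k" using k by simp
  finally show ?thesis by simp
qed

lemma finite_Amod: "finite (Amod p d)"
proof (rule finite_subset)
  show "Amod p d \<subseteq> (\<lambda>v i. if i \<le> d then v i else 0) ` PiE {..d} (\<lambda>_. {0..<int p})"
  proof
    fix v assume v: "v \<in> Amod p d"
    then have "v = (\<lambda>i. if i \<le> d then restrict v {..d} i else 0)" by (auto simp: Amod_def)
    moreover have "restrict v {..d} \<in> PiE {..d} (\<lambda>_. {0..<int p})" using v by (auto simp: Amod_def)
    ultimately show "v \<in> (\<lambda>v i. if i \<le> d then v i else 0) ` PiE {..d} (\<lambda>_. {0..<int p})" by blast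
  qed
qed (simp add: finite_PiE)

definition negA :: "nat \<Rightarrow> (nat \<Rightarrow> int) \<Rightarrow> (nat \<Rightarrow> int)" where
  "negA p v = (\<lambda>i. (- v i) mod int p)"

definition Amod_semidirect ::
  "('a, 'b) monoid_scheme \<Rightarrow> nat \<Rightarrow> nat \<Rightarrow> (nat \<Rightarrow> 'a \<Rightarrow> int) \<Rightarrow> ('a \<times> (nat \<Rightarrow> int)) monoid" where
  "Amod_semidirect D p d \<delta> =
    \<lparr>carrier = carrier D \<times> Amod p d,
     monoid.mult = (\<lambda>a b. (fst a \<otimes>\<^bsub>D\<^esub> fst b, addA p (actA p d \<delta> (fst b) (snd a)) (snd b))),
     one = (\<one>\<^bsub>D\<^esub>, \<lambda>i. 0)\<rparr>"

locale Amod_action = group D for D (structure) +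
  fixes p d :: nat and \<delta> :: "nat \<Rightarrow> 'a \<Rightarrow> int"
  assumes p_gt_1: "1 < p"
    and delta_hom: "\<And>j. j \<in> {1..d} \<Longrightarrow> \<delta> j \<in> hom D (add_monoid (residue_ring (int p)))"
begin

abbreviation act where "act \<equiv> actA p d \<delta>"

lemma delta_group_hom:
  assumes "j \<in> {1..d}"
  shows "group_hom D (add_monoid (residue_ring (int p))) (\<delta> j)"
proof -
  interpret R: residues "int p" "residue_ring (int p)" using p_gt_1 by unfold_locales simp_all
  show ?thesis
    using delta_hom[OF assms] R.a_group by unfold_locales simp
qed

lemma delta_mult:
  "j \<in> {1..d} \<Longrightarrow> x \<in> carrier D \<Longrightarrow> y \<in> carrier D \<Longrightarrow> \<delta> j (x \<otimes> y) = (\<delta> j x + \<delta> j y) mod int p"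
  using delta_hom unfolding hom_def by (auto simp: residue_ring_def)

lemma delta_one: "j \<in> {1..d} \<Longrightarrow> \<delta> j \<one> = 0"
  using group_hom.hom_one[OF delta_group_hom] by (simp add: residue_ring_def)

lemma delta_inv: "j \<in> {1..d} \<Longrightarrow> x \<in> carrier D \<Longrightarrow> \<delta> j (inv x) = (- \<delta> j x) mod int p"
proof -
  assume j: "j \<in> {1..d}" and x: "x \<in> carrier D"
  interpret R: residues "int p" "residue_ring (int p)" using p_gt_1 by unfold_locales simp_all
  have "\<delta> j (inv x) = \<ominus>\<^bsub>residue_ring (int p)\<^esub> \<delta> j x"
    using group_hom.hom_inv[OF delta_group_hom[OF j] x] by (simp add: a_inv_def)
  then show ?thesis by (simp add: R.res_neg_eq)
qed

lemma delta_commutator: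
  "j \<in> {1..d} \<Longrightarrow> x \<in> carrier D \<Longrightarrow> y \<in> carrier D \<Longrightarrow> \<delta> j (commutator D x y) = 0"
  unfolding commutator_def using p_gt_1 by (simp add: delta_mult delta_inv mod_simps)

lemma sum_delta_mult_mod:
  assumes "g \<in> carrier D" "h \<in> carrier D"
  shows "(\<Sum>j\<in>{1..d}. v j * \<delta> j (g \<otimes> h)) mod int p
    = ((\<Sum>j\<in>{1..d}. v j * \<delta> j g) + (\<Sum>j\<in>{1..d}. v j * \<delta> j h)) mod int p"
  using sum_mult_mod_right[of "\<lambda>j. \<delta> j g + \<delta> j h" "int p" v "{1..d}"] assms
  by (simp add: delta_mult mult.commute distrib_left sum.distrib)

lemma sum_addA_mod:
  "(\<Sum>j\<in>{1..d}. addA p v w j * \<delta> j g) mod int p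
    = ((\<Sum>j\<in>{1..d}. v j * \<delta> j g) + (\<Sum>j\<in>{1..d}. w j * \<delta> j g)) mod int p"
  using sum_mult_mod_right[of "\<lambda>j. v j + w j" "int p" "\<lambda>j. \<delta> j g" "{1..d}"]
  by (simp add: addA_def distrib_right sum.distrib)

lemma act_act:
  assumes "g \<in> carrier D" "h \<in> carrier D"
  shows "act h (act g v) = act (g \<otimes> h) v"
proof
  fix i
  define S where "S x = (\<Sum>j\<in>{1..d}. v j * \<delta> j x)" for x
  have "(\<Sum>j\<in>{1..d}. act g v j * \<delta> j h) = S h"
    unfolding S_def by (rule sum.cong) (auto simp: actA_def)
  then have "act h (act g v) 0 = ((v 0 - S g) mod int p - S h) mod int p"
    by (simp add: actA_def S_def)
  also have "\<dots> = (v 0 - (S g + S h)) mod int p" by (simp add: mod_diff_left_eq diff_diff_eq)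
  also have "\<dots> = (v 0 - S (g \<otimes> h)) mod int p"
    using mod_diff_right_cong[OF sum_delta_mult_mod[OF assms, of v, folded S_def]] by simp
  also have "\<dots> = act (g \<otimes> h) v 0" by (simp add: actA_def S_def)
  finally show "act h (act g v) i = act (g \<otimes> h) v i" by (cases "i = 0") (simp_all add: actA_def)
qed

lemma act_addA: "act g (addA p v w) = addA p (act g v) (act g w)"
proof
  fix i
  define S where "S u = (\<Sum>j\<in>{1..d}. u j * \<delta> j g)" for u
  have "act g (addA p v w) 0 = ((v 0 + w 0) mod int p - S (addA p v w)) mod int p"
    by (simp add: actA_def addA_def S_def)
  also have "\<dots> = (v 0 + w 0 - S (addA p v w)) mod int p" by (rule mod_diff_left_eq)
  also have "\<dots> = (v 0 - S v + (w 0 - S w)) mod int p"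
    using mod_diff_right_cong[OF sum_addA_mod[of v w g, folded S_def], of "v 0 + w 0"]
    by (simp add: algebra_simps)
  also have "\<dots> = ((v 0 - S v) mod int p + (w 0 - S w) mod int p) mod int p"
    by (simp only: mod_add_eq)
  also have "\<dots> = addA p (act g v) (act g w) 0" by (simp add: actA_def addA_def S_def)
  finally show "act g (addA p v w) i = addA p (act g v) (act g w) i"
    by (cases "i = 0") (simp_all add: actA_def addA_def)
qed

lemma Amod_mod: "v \<in> Amod p d \<Longrightarrow> v i mod int p = v i"
  unfolding Amod_def using p_gt_1 by (cases "i \<le> d") auto

lemma act_one: "v \<in> Amod p d \<Longrightarrow> act \<one> v = v"
  by (auto simp: actA_def delta_one Amod_mod)

lemma act_zero: "act g (\<lambda>i. 0) = (\<lambda>i. 0)"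
  by (auto simp: actA_def)

lemma act_Amod: "v \<in> Amod p d \<Longrightarrow> act g v \<in> Amod p d"
  using p_gt_1 unfolding Amod_def actA_def by auto

lemma addA_Amod: "v \<in> Amod p d \<Longrightarrow> w \<in> Amod p d \<Longrightarrow> addA p v w \<in> Amod p d"
  using p_gt_1 unfolding Amod_def addA_def by auto

lemma zero_Amod: "(\<lambda>i. 0) \<in> Amod p d"
  using p_gt_1 by (simp add: Amod_def)

lemma addA_assoc: "addA p (addA p u v) w = addA p u (addA p v w)"
  by (simp add: addA_def mod_simps algebra_simps)

lemma addA_commute: "addA p v w = addA p w v"
  by (simp add: addA_def algebra_simps)

lemma addA_zero_left: "v \<in> Amod p d \<Longrightarrow> addA p (\<lambda>i. 0) v = v"
  by (auto simp: addA_def Amod_mod)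

lemma negA_Amod: "v \<in> Amod p d \<Longrightarrow> negA p v \<in> Amod p d"
  using p_gt_1 by (auto simp: Amod_def negA_def)

lemma addA_negA_left: "addA p (negA p v) v = (\<lambda>i. 0)"
  by (simp add: addA_def negA_def mod_simps)

abbreviation E where "E \<equiv> Amod_semidirect D p d \<delta>"

lemma Amod_semidirect_simps [simp]:
  "carrier E = carrier D \<times> Amod p d"
  "a \<otimes>\<^bsub>E\<^esub> b = (fst a \<otimes> fst b, addA p (act (fst b) (snd a)) (snd b))"
  "\<one>\<^bsub>E\<^esub> = (\<one>, \<lambda>i. 0)"
  by (simp_all add: Amod_semidirect_def)

lemma group_Amod_semidirect: "group E"
proof (rule groupI)
  fix a b assume "a \<in> carrier E" "b \<in> carrier E"
  then show "a \<otimes>\<^bsub>E\<^esub> b \<in> carrier E" by (auto simp: act_Amod addA_Amod)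
next
  show "\<one>\<^bsub>E\<^esub> \<in> carrier E" using zero_Amod by simp
next
  fix a b c assume "a \<in> carrier E" "b \<in> carrier E" "c \<in> carrier E"
  then show "a \<otimes>\<^bsub>E\<^esub> b \<otimes>\<^bsub>E\<^esub> c = a \<otimes>\<^bsub>E\<^esub> (b \<otimes>\<^bsub>E\<^esub> c)"
    by (auto simp: m_assoc act_addA act_act addA_assoc)
next
  fix a assume "a \<in> carrier E"
  then show "\<one>\<^bsub>E\<^esub> \<otimes>\<^bsub>E\<^esub> a = a" by (auto simp: act_zero addA_zero_left)
next
  fix a assume "a \<in> carrier E"
  then obtain g v where gv: "a = (g, v)" "g \<in> carrier D" "v \<in> Amod p d" by auto
  have "(inv g, act (inv g) (negA p v)) \<in> carrier E"
    using gv by (simp add: act_Amod negA_Amod)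
  moreover have "(inv g, act (inv g) (negA p v)) \<otimes>\<^bsub>E\<^esub> a = \<one>\<^bsub>E\<^esub>"
    using gv by (simp add: act_act act_one negA_Amod addA_negA_left)
  ultimately show "\<exists>b\<in>carrier E. b \<otimes>\<^bsub>E\<^esub> a = \<one>\<^bsub>E\<^esub>" by blast
qed

lemma inv_Amod_semidirect:
  "g \<in> carrier D \<Longrightarrow> v \<in> Amod p d \<Longrightarrow> inv\<^bsub>E\<^esub> (g, v) = (inv g, act (inv g) (negA p v))"
  by (rule group.inv_equality[OF group_Amod_semidirect])
    (simp_all add: act_act act_one negA_Amod addA_negA_left act_Amod)

lemma finite_Amod_semidirect: "finite (carrier D) \<Longrightarrow> finite (carrier E)"
  using finite_Amod by simp

lemma snd_mult_Amod_semidirect: "i \<noteq> 0 \<Longrightarrow> snd (a \<otimes>\<^bsub>E\<^esub> b) i = (snd a i + snd b i) mod int p"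
  by (simp add: actA_def addA_def)

lemma snd_inv_Amod_semidirect:
  "i \<noteq> 0 \<Longrightarrow> a \<in> carrier E \<Longrightarrow> snd (inv\<^bsub>E\<^esub> a) i = (- snd a i) mod int p"
  by (cases a) (simp add: inv_Amod_semidirect actA_def negA_def)

lemma fst_inv_Amod_semidirect: "a \<in> carrier E \<Longrightarrow> fst (inv\<^bsub>E\<^esub> a) = inv (fst a)"
  by (cases a) (simp add: inv_Amod_semidirect)

lemma in_center_Amod_semidirect:
  assumes z: "z \<in> center D" "\<forall>j\<in>{1..d}. \<delta> j z = 0"
    and u: "u \<in> Amod p d" "\<forall>i. i \<noteq> 0 \<longrightarrow> u i = 0"
  shows "(z, u) \<in> center E"
proof -
  have "(z, u) \<otimes>\<^bsub>E\<^esub> b = b \<otimes>\<^bsub>E\<^esub> (z, u)" if b: "b \<in> carrier E" for b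
  proof -
    obtain h w where hw: "b = (h, w)" "h \<in> carrier D" "w \<in> Amod p d" using b by auto
    have "act h u = u"
    proof
      fix i show "act h u i = u i"
        using u by (cases "i = 0") (auto simp: actA_def Amod_mod)
    qed
    moreover have "act z w = w"
    proof
      fix i show "act z w i = w i"
        using z hw by (cases "i = 0") (auto simp: actA_def Amod_mod)
    qed
    ultimately show ?thesis using hw z by (simp add: addA_commute center_def)
  qed
  moreover have "(z, u) \<in> carrier E" using z u by (simp add: center_def)
  ultimately show ?thesis unfolding center_def by blast
qed

lemma commutator_in_center_Amod_semidirect:
  assumes class2: "\<forall>x\<in>carrier D. \<forall>y\<in>carrier D. commutator D x y \<in> center D"
    and a: "a \<in> carrier E" and b: "b \<in> carrier E"
  shows "commutator E a b \<in> center E"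
proof -
  interpret E: group E by (rule group_Amod_semidirect)
  obtain z u where zu: "commutator E a b = (z, u)" by fastforce
  have u: "u \<in> Amod p d" using E.commutator_closed[OF a b] zu by simp
  have "z = commutator D (fst a) (fst b)"
    using a b zu(1)[symmetric] by (simp add: commutator_def fst_inv_Amod_semidirect)
  then have z: "z \<in> center D" "\<forall>j\<in>{1..d}. \<delta> j z = 0"
    using a b class2 delta_commutator by auto
  have "u i = 0" if i: "i \<noteq> 0" for i
  proof -
    have "u i = snd (commutator E a b) i" using zu by simp
    also have "\<dots> = 0" unfolding commutator_def using a b
      by (simp add: snd_mult_Amod_semidirect[OF i] snd_inv_Amod_semidirect[OF i] mod_simps
          del: Amod_semidirect_simps)
    finally show ?thesis .
  qed
  then show ?thesis using in_center_Amod_semidirect[OF z u] zu(1) by simp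
qed

lemma pow_Amod_semidirect:
  assumes g: "g \<in> carrier D" and v: "v \<in> Amod p d"
  shows "(g, v) [^]\<^bsub>E\<^esub> (n::nat) = (g [^] n, \<lambda>i. if i = 0
     then (int n * v 0 - int (n choose 2) * (\<Sum>j\<in>{1..d}. v j * \<delta> j g)) mod int p
     else (int n * v i) mod int p)"
proof (induction n)
  case 0
  then show ?case by (simp add: Amod_semidirect_def fun_eq_iff numeral_2_eq_2)
next
  case (Suc n)
  define S where "S = (\<Sum>j\<in>{1..d}. v j * \<delta> j g)"
  define w where "w = (\<lambda>i. if i = 0 then (int n * v 0 - int (n choose 2) * S) mod int p
     else (int n * v i) mod int p)"
  have T: "(\<Sum>j\<in>{1..d}. w j * \<delta> j g) mod int p = (int n * S) mod int p"
    using sum_mult_mod_right[of "\<lambda>j. int n * v j" "int p" "\<lambda>j. \<delta> j g" "{1..d}"]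
    by (simp add: w_def S_def sum_distrib_left mult.assoc)
  have ch: "int (Suc n choose 2) = int (n choose 2) + int n" by (simp add: numeral_2_eq_2)
  have "addA p (act g w) v 0 = ((w 0 - (\<Sum>j\<in>{1..d}. w j * \<delta> j g)) mod int p + v 0) mod int p"
    by (simp add: addA_def actA_def)
  also have "\<dots> = (w 0 + v 0 - (\<Sum>j\<in>{1..d}. w j * \<delta> j g)) mod int p"
    by (simp only: mod_add_left_eq) (simp add: algebra_simps)
  also have "\<dots> = (w 0 + v 0 - int n * S) mod int p" by (rule mod_diff_right_cong[OF T])
  also have "\<dots> = (int n * v 0 - int (n choose 2) * S + v 0 - int n * S) mod int p"
    unfolding w_def by (simp only: if_P[OF refl]) (metis mod_add_left_eq mod_diff_left_eq)
  also have "\<dots> = (int (Suc n) * v 0 - int (Suc n choose 2) * S) mod int p"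
    unfolding ch by (simp add: algebra_simps)
  finally have "addA p (act g w) v 0 = (int (Suc n) * v 0 - int (Suc n choose 2) * S) mod int p" .
  moreover have "addA p (act g w) v i = (int (Suc n) * v i) mod int p" if "i \<noteq> 0" for i
    using that by (simp add: addA_def actA_def w_def mod_add_right_eq algebra_simps)
  ultimately have step: "addA p (act g w) v = (\<lambda>i. if i = 0
     then (int (Suc n) * v 0 - int (Suc n choose 2) * S) mod int p
     else (int (Suc n) * v i) mod int p)" by auto
  have "(g, v) [^]\<^bsub>E\<^esub> n = (g [^] n, w)" using Suc.IH unfolding w_def S_def .
  then have "(g, v) [^]\<^bsub>E\<^esub> Suc n = (g [^] Suc n, addA p (act g w) v)" by simp
  then show ?case unfolding step S_def .
qed

lemma exponent_Amod_semidirect: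
  assumes "odd p" and exp: "\<forall>x\<in>carrier D. x [^] p = \<one>" and a: "a \<in> carrier E"
  shows "a [^]\<^bsub>E\<^esub> p = \<one>\<^bsub>E\<^esub>"
proof -
  obtain g v where gv: "a = (g, v)" "g \<in> carrier D" "v \<in> Amod p d" using a by auto
  obtain c where "p choose 2 = p * c" using dvd_choose_2[OF assms(1)] by blast
  then show ?thesis using gv exp pow_Amod_semidirect[OF gv(2,3), of p] by (simp add: fun_eq_iff)
qed

lemma group_hom_fst: "group_hom E D fst"
  using group_Amod_semidirect is_group by (auto simp: group_hom_def group_hom_axioms_def hom_def)

lemma derivation_from_graph:
  assumes \<Gamma>: "subgroup \<Gamma> E" and onto: "fst ` \<Gamma> = carrier D" and inj: "inj_on fst \<Gamma>"
  shows "\<exists>\<tau>. is_derivation D p d \<delta> \<tau> \<and> (\<forall>a\<in>\<Gamma>. \<tau> (fst a) = snd a)"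
proof -
  define \<tau> where "\<tau> x = snd (the_inv_into \<Gamma> fst x)" for x
  have \<tau>: "\<tau> (fst a) = snd a" if "a \<in> \<Gamma>" for a
    unfolding \<tau>_def using the_inv_into_f_f[OF inj that] by simp
  have graph: "(x, \<tau> x) \<in> \<Gamma>" if "x \<in> carrier D" for x
  proof -
    have "x \<in> fst ` \<Gamma>" using onto that by simp
    then obtain a where a: "a \<in> \<Gamma>" "x = fst a" by blast
    then have "(x, \<tau> x) = a" using \<tau> by (simp add: prod_eq_iff)
    then show ?thesis using a by simp
  qed
  have "is_derivation D p d \<delta> \<tau>"
    unfolding is_derivation_def
  proof (intro conjI ballI)
    fix x assume "x \<in> carrier D"
    then have "(x, \<tau> x) \<in> carrier E" using graph subgroup.subset[OF \<Gamma>] by blast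
    then show "\<tau> x \<in> Amod p d" by simp
  next
    fix x z assume "x \<in> carrier D" "z \<in> carrier D"
    then have "(x, \<tau> x) \<otimes>\<^bsub>E\<^esub> (z, \<tau> z) \<in> \<Gamma>" using graph subgroup.m_closed[OF \<Gamma>] by blast
    from \<tau>[OF this] show "\<tau> (x \<otimes> z) = addA p (actA p d \<delta> z (\<tau> x)) (\<tau> z)" by simp
  qed
  then show ?thesis using \<tau> by blast
qed


lemma card_generate_Amod_semidirect_le:
  assumes "odd p" and fin: "finite (carrier D)" and exp: "\<forall>x\<in>carrier D. x [^] p = \<one>"
    and class2: "\<forall>x\<in>carrier D. \<forall>y\<in>carrier D. commutator D x y \<in> center D"
    and g: "g ` {1..n} \<subseteq> carrier E"
  shows "card (generate E (g ` {1..n})) \<le> p ^ n * p ^ (n choose 2)"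
proof (rule group.card_generate_class2_le[OF group_Amod_semidirect _ _ _ _ g])
  show "finite (carrier E)" using finite_Amod_semidirect[OF fin] .
  show "0 < p" using p_gt_1 by simp
  show "\<forall>a\<in>carrier E. a [^]\<^bsub>E\<^esub> p = \<one>\<^bsub>E\<^esub>" using exponent_Amod_semidirect[OF assms(1) exp] by blast
  show "\<forall>a\<in>carrier E. \<forall>b\<in>carrier E. commutator E a b \<in> center E"
    using commutator_in_center_Amod_semidirect[OF class2] by blast
qed

lemma derivation_extending_exists:
  assumes "odd p" and fin: "finite (carrier D)" and exp: "\<forall>x\<in>carrier D. x [^] p = \<one>"
    and class2: "\<forall>x\<in>carrier D. \<forall>y\<in>carrier D. commutator D x y \<in> center D"
    and card: "card (carrier D) = p ^ d * p ^ (d choose 2)"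
    and y: "y ` {1..d} \<subseteq> carrier D" "generate D (y ` {1..d}) = carrier D"
    and f: "\<forall>i\<in>{1..d}. f i \<in> Amod p d"
  shows "\<exists>\<tau>. is_derivation D p d \<delta> \<tau> \<and> (\<forall>i\<in>{1..d}. \<tau> (y i) = f i)"
proof -
  define gens where "gens i = (y i, f i)" for i
  define \<Gamma> where "\<Gamma> = generate E (gens ` {1..d})"
  have gens: "gens ` {1..d} \<subseteq> carrier E" using y(1) f by (auto simp: gens_def)
  have \<Gamma>: "subgroup \<Gamma> E"
    unfolding \<Gamma>_def using gens by (rule group.generate_is_subgroup[OF group_Amod_semidirect])
  have finite_\<Gamma>: "finite \<Gamma>"
    using finite_subset[OF subgroup.subset[OF \<Gamma>] finite_Amod_semidirect[OF fin]] .
  have onto: "fst ` \<Gamma> = carrier D"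
    using group_hom.generate_img[OF group_hom_fst gens] y(2) by (simp add: \<Gamma>_def gens_def image_image)
  have "card \<Gamma> \<le> card (fst ` \<Gamma>)"
    using card_generate_Amod_semidirect_le[OF assms(1-4) gens] card onto by (simp add: \<Gamma>_def)
  then have "inj_on fst \<Gamma>"
    using card_image_le[OF finite_\<Gamma>, of fst] by (intro eq_card_imp_inj_on[OF finite_\<Gamma>]) simp
  then obtain \<tau> where "is_derivation D p d \<delta> \<tau>" and \<tau>: "\<forall>a\<in>\<Gamma>. \<tau> (fst a) = snd a"
    using derivation_from_graph[OF \<Gamma> onto] by blast
  moreover have "\<tau> (y i) = f i" if "i \<in> {1..d}" for i
  proof -
    have "gens i \<in> \<Gamma>" unfolding \<Gamma>_def using that by (auto intro: generate.incl)
    from \<tau>[rule_format, OF this] show ?thesis by (simp add: gens_def)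
  qed
  ultimately show ?thesis by blast
qed

end

theorem lemma3p6:
  fixes D :: "('a, 'b) monoid_scheme" and p d :: nat and y :: "nat \<Rightarrow> 'a"
    and \<delta> :: "nat \<Rightarrow> 'a \<Rightarrow> int" and f :: "nat \<Rightarrow> nat \<Rightarrow> int"
  assumes "Factorial_Ring.prime p" and "odd p" and "d \<ge> 2"
    and "group D" and "finite (carrier D)"
    and "y ` {1..d} \<subseteq> carrier D"
    and "generate D (y ` {1..d}) = carrier D"
    and "\<forall>x\<in>carrier D. x [^]\<^bsub>D\<^esub> p = \<one>\<^bsub>D\<^esub>"
    and "gamma2 D \<noteq> {\<one>\<^bsub>D\<^esub>}" and "gamma3 D = {\<one>\<^bsub>D\<^esub>}"
    and "card (rcosets\<^bsub>D\<^esub> (frattini D)) = p ^ d"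
    and "card (rcosets\<^bsub>D\<lparr>carrier := frattini D\<rparr>\<^esub> (gamma3 D)) = p ^ (d choose 2)"
    and "\<forall>j\<in>{1..d}. \<delta> j \<in> hom D (add_monoid (residue_ring (int p)))"
    and "\<forall>j\<in>{1..d}. \<forall>i\<in>{1..d}. \<delta> j (y i) = (if i = j then 1 else 0)"
    and "\<forall>i\<in>{1..d}. f i \<in> Amod p d"
  shows "\<exists>\<tau>. is_derivation D p d \<delta> \<tau> \<and> (\<forall>i\<in>{1..d}. \<tau> (y i) = f i)"
proof -
  interpret Amod_action D p d \<delta>
    by (rule Amod_action.intro[OF assms(4)])
      (use assms(13) prime_gt_1_nat[OF assms(1)] in \<open>simp add: Amod_action_axioms_def\<close>)
  have "card (carrier D) = p ^ d * p ^ (d choose 2)"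
    using card_carrier_frattini[OF assms(5)] assms(10-12) by simp
  moreover have "\<forall>x\<in>carrier D. \<forall>y\<in>carrier D. commutator D x y \<in> center D"
    using commutator_in_center_if_gamma3_trivial[OF assms(10)] by blast
  ultimately show ?thesis
    using derivation_extending_exists[OF assms(2,5,8)] assms(6,7,15) by blast
qed

end
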